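(* Let $\Gamma\in\mathcal S$ have $n$ vertices and let $\varphi$ be an embedding into $\mathbb Z^n$ such that exactly one index is of type (9), exactly one is of type (5), exactly one index $k$ is of type (2), and every other index is of type (4) or (7). Let $v$ be the unique vertex whose image $\varphi(v)$ has nonzero coefficient at $E_k$. Then $d(v)=-2$; in fact $\varphi(v)=E_{i_v}-E_k$ for some index $i_v$.
   Context: A plumbing tree is a finite tree $\Gamma$ each of whose vertices $v$ carries an integer decoration $d(v)$. $\Gamma$ is minimal if no vertex has decoration $-1$. For $n\ge 1$ let $(\mathbb Z^n,Q_n)$ be the lattice with basis $E_1,\dots,E_n$ and $Q_n(E_i,E_j)=-\delta_{ij}$, and let $K=\sum_{i=1}^n E_i$. A plumbing tree $\Gamma$ on $n$ vertices is a symplectic plumbing tree if there is a map $\varphi$ (an embedding) from its vertex set to $\mathbb Z^n$ such that: for distinct vertices $v_1,v_2$, $Q_n(\varphi(v_1),\varphi(v_2))$ is $1$ if they are adjacent and $0$ otherwise; $Q_n(\varphi(v),\varphi(v))=d(v)$ for every $v$; and $Q_n(\varphi(v),K)+Q_n(\varphi(v),\varphi(v))=-2$ for every $v$. $\mathcal S$ is the set of minimal, connected symplectic plumbing trees. Index types: write $\varphi(v)=\sum_i a_{v,i}E_i$; for an index $i$ consider the multiset of nonzero coefficients $a_{v,i}$ as $v$ ranges over all vertices. Index $i$ is of type (1) if this multiset is $\{1\}$, (2) if $\{-1\}$, (3) if $\{-2\}$, (4) if $\{1,-1\}$, (5) if $\{1,-2\}$, (6) if $\{-1,-1\}$, (7)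 if $\{1,-1,-1\}$, (9) if $\{1,-1,-1,-1\}$, and (10) if it is empty. *)

theory Defs
  imports Main "HOL-Library.Multiset"
begin

text \<open>Vectors in Z^n are modelled as functions nat => int; index i < n
  corresponds to basis vector E_(i+1). Coefficients at indices >= n are required to be 0.\<close>

definition unitv :: "nat \<Rightarrow> (nat \<Rightarrow> int)" where
  "unitv i = (\<lambda>j. if j = i then 1 else 0)"

definition Qn :: "nat \<Rightarrow> (nat \<Rightarrow> int) \<Rightarrow> (nat \<Rightarrow> int) \<Rightarrow> int" where
  "Qn n x y = - (\<Sum>i<n. x i * y i)"

definition Kn :: "nat \<Rightarrow> (nat \<Rightarrow> int)" where
  "Kn n = (\<lambda>i. if i < n then 1 else 0)"

definition is_tree :: "'v set \<Rightarrow> ('v \<Rightarrow> 'v \<Rightarrow> bool) \<Rightarrow> bool" where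
  "is_tree V E \<longleftrightarrow> finite V \<and> V \<noteq> {} \<and>
     (\<forall>x y. E x y \<longrightarrow> x \<in> V \<and> y \<in> V \<and> x \<noteq> y \<and> E y x) \<and>
     (\<forall>x\<in>V. \<forall>y\<in>V. E\<^sup>*\<^sup>* x y) \<and>
     card {{x, y} | x y. E x y} + 1 = card V"

definition minimal_plumbing :: "'v set \<Rightarrow> ('v \<Rightarrow> int) \<Rightarrow> bool" where
  "minimal_plumbing V d \<longleftrightarrow> (\<forall>v\<in>V. d v \<noteq> -1)"

definition sympl_embedding ::
  "'v set \<Rightarrow> ('v \<Rightarrow> 'v \<Rightarrow> bool) \<Rightarrow> ('v \<Rightarrow> int) \<Rightarrow> ('v \<Rightarrow> nat \<Rightarrow> int) \<Rightarrow> bool" where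
  "sympl_embedding V E d \<phi> \<longleftrightarrow>
     (\<forall>v\<in>V. \<forall>j\<ge>card V. \<phi> v j = 0) \<and>
     (\<forall>v1\<in>V. \<forall>v2\<in>V. v1 \<noteq> v2 \<longrightarrow>
        Qn (card V) (\<phi> v1) (\<phi> v2) = (if E v1 v2 then 1 else 0)) \<and>
     (\<forall>v\<in>V. Qn (card V) (\<phi> v) (\<phi> v) = d v) \<and>
     (\<forall>v\<in>V. Qn (card V) (\<phi> v) (Kn (card V)) + Qn (card V) (\<phi> v) (\<phi> v) = -2)"

definition symplectic_plumbing_tree :: "'v set \<Rightarrow> ('v \<Rightarrow> 'v \<Rightarrow> bool) \<Rightarrow> ('v \<Rightarrow> int) \<Rightarrow> bool" where
  "symplectic_plumbing_tree V E d \<longleftrightarrow> is_tree V E \<and> (\<exists>\<phi>. sympl_embedding V E d \<phi>)"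

definition in_S :: "'v set \<Rightarrow> ('v \<Rightarrow> 'v \<Rightarrow> bool) \<Rightarrow> ('v \<Rightarrow> int) \<Rightarrow> bool" where
  "in_S V E d \<longleftrightarrow> symplectic_plumbing_tree V E d \<and> minimal_plumbing V d"

definition index_coeffs :: "'v set \<Rightarrow> ('v \<Rightarrow> nat \<Rightarrow> int) \<Rightarrow> nat \<Rightarrow> int multiset" where
  "index_coeffs V \<phi> i = {# \<phi> v i. v \<in># filter_mset (\<lambda>v. \<phi> v i \<noteq> 0) (mset_set V) #}"

definition type2 where "type2 V \<phi> i \<longleftrightarrow> index_coeffs V \<phi> i = {#-1#}"
definition type4 where "type4 V \<phi> i \<longleftrightarrow> index_coeffs V \<phi> i = {#1, -1#}"
definition type5 where "type5 V \<phi> i \<longleftrightarrow> index_coeffs V \<phi> i = {#1, -2#}"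
definition type7 where "type7 V \<phi> i \<longleftrightarrow> index_coeffs V \<phi> i = {#1, -1, -1#}"
definition type9 where "type9 V \<phi> i \<longleftrightarrow> index_coeffs V \<phi> i = {#1, -1, -1, -1#}"

end

theory Submission
  imports Defs
begin

text \<open>
  Adjunction says \<open>\<Sum>\<^sub>i (a\<^sub>i\<^sup>2 + a\<^sub>i) = 2\<close> for the coefficients \<open>a\<^sub>i\<close> of every vertex. As the
  index types only allow the coefficients \<open>1, -1, -2\<close>, every vertex has exactly one coefficient
  in \<open>{1, -2}\<close>, all others being \<open>-1\<close> or \<open>0\<close>.

  Suppose \<open>\<phi>(v)\<close> is not of the form \<open>E\<^sub>a - E\<^sub>k\<close>. Then every vertex \<open>x\<close> has a coefficient \<open>-1\<close>
  at some index \<open>i \<noteq> k\<close> (by minimality, resp. by pairing a \<open>-2\<close> with the \<open>1\<close> in its column),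
  and the vertex carrying the \<open>1\<close> of column \<open>i\<close> feeds \<open>x\<close>. Tracing feeders back in the finite
  vertex set gives a set \<open>C\<close> containing all feeders of its members, each member feeding
  another; \<open>C\<close> misses the vertex with the \<open>-2\<close>, which feeds nobody. The pairing of
  \<open>\<Sum>\<^sub>C \<phi>\<close> with the sum over the complement is nonnegative column by column, yet negative because
  the tree is connected and has an edge leaving \<open>C\<close>.
\<close>

lemma sum_le_member_nonpos:
  fixes f :: "'a \<Rightarrow> int"
  assumes "finite A" "z \<in> A" "\<And>x. x \<in> A \<Longrightarrow> f x \<le> 0"
  shows "sum f A \<le> f z"
proof -
  have "sum f A = f z + sum f (A - {z})" using assms by (simp add: sum.remove)
  moreover have "sum f (A - {z}) \<le> 0" using assms by (intro sum_nonpos) auto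
  ultimately show ?thesis by simp
qed

lemma rtranclp_exits_set:
  assumes "E\<^sup>*\<^sup>* a b" "a \<in> C" "b \<notin> C"
  shows "\<exists>p q. E p q \<and> p \<in> C \<and> q \<notin> C"
  using assms by (induction rule: rtranclp_induct) auto

lemma finite_relation_closed_core:
  assumes fin: "finite V" and RV: "R \<subseteq> V \<times> V" and "V \<noteq> {}"
    and pred: "\<And>x. x \<in> V \<Longrightarrow> \<exists>y. (y, x) \<in> R"
  obtains C where "C \<subseteq> V" "C \<noteq> {}" "\<And>y z. (y, z) \<in> R \<Longrightarrow> z \<in> C \<Longrightarrow> y \<in> C"
    "\<And>y. y \<in> C \<Longrightarrow> \<exists>z\<in>C. (y, z) \<in> R"
proof -
  have "\<not> wf R"
  proof
    assume "wf R"
    then obtain x where "x \<in> V" "\<And>y. (y, x) \<in> R \<Longrightarrow> y \<notin> V"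
      using \<open>V \<noteq> {}\<close> by (metis equals0I wfE_min)
    then show False using pred RV by blast
  qed
  moreover have "finite R" using fin RV finite_subset by blast
  ultimately obtain x0 where x0: "(x0, x0) \<in> R\<^sup>+"
    using finite_acyclic_wf unfolding acyclic_def by blast
  define C where "C = {y. (y, x0) \<in> R\<^sup>+}"
  show thesis
  proof
    show "C \<subseteq> V" unfolding C_def using RV by (auto dest: tranclD)
    show "C \<noteq> {}" unfolding C_def using x0 by blast
    show "y \<in> C" if "(y, z) \<in> R" "z \<in> C" for y z
      using that unfolding C_def by (simp add: trancl_into_trancl2)
    show "\<exists>z\<in>C. (y, z) \<in> R" if y: "y \<in> C" for y
    proof -
      obtain z where "(y, z) \<in> R" "(z, x0) \<in> R\<^sup>*"
        using y unfolding C_def by (blast dest: tranclD)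
      moreover have "z \<in> C"
        using calculation(2) x0 unfolding C_def by (auto simp: rtrancl_eq_or_trancl)
      ultimately show ?thesis by blast
    qed
  qed
qed

definition feeds :: "nat \<Rightarrow> ('v \<Rightarrow> nat \<Rightarrow> int) \<Rightarrow> 'v \<Rightarrow> 'v \<Rightarrow> bool" where
  "feeds n \<phi> y x \<longleftrightarrow> (\<exists>i<n. 0 < \<phi> y i \<and> \<phi> x i < 0)"

lemma cut_column_product_nonneg:
  fixes \<phi> :: "'v \<Rightarrow> nat \<Rightarrow> int"
  assumes fin: "finite V" and CV: "C \<subseteq> V"
    and le1: "\<And>x. x \<in> V \<Longrightarrow> \<phi> x i \<le> 1"
    and col_unique: "\<And>x y. x \<in> V \<Longrightarrow> y \<in> V \<Longrightarrow> 0 < \<phi> x i \<Longrightarrow> 0 < \<phi> y i \<Longrightarrow> x = y"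
    and row_unique: "\<And>x j. x \<in> V \<Longrightarrow> j < n \<Longrightarrow> 0 < \<phi> x i \<Longrightarrow> 0 < \<phi> x j \<Longrightarrow> j = i"
    and closed: "\<And>y z. y \<in> V \<Longrightarrow> z \<in> C \<Longrightarrow> feeds n \<phi> y z \<Longrightarrow> y \<in> C"
    and succ: "\<And>y. y \<in> C \<Longrightarrow> \<exists>z\<in>C. feeds n \<phi> y z"
    and i: "i < n"
  shows "0 \<le> (\<Sum>y\<in>C. \<phi> y i) * (\<Sum>z\<in>V - C. \<phi> z i)"
proof (cases "\<exists>y\<in>V. 0 < \<phi> y i")
  case False
  then have "(\<Sum>y\<in>C. \<phi> y i) \<le> 0" "(\<Sum>z\<in>V - C. \<phi> z i) \<le> 0"
    using CV by (auto intro!: sum_nonpos simp: not_less)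
  then show ?thesis by (simp add: mult_nonpos_nonpos)
next
  case True
  then obtain y where y: "y \<in> V" "0 < \<phi> y i" by blast
  have others: "\<phi> x i \<le> 0" if "x \<in> V" "x \<noteq> y" for x
    using col_unique[OF that(1) y(1)] y(2) that(2) by force
  show ?thesis
  proof (cases "y \<in> C")
    case True
    then obtain z j where z: "z \<in> C" "j < n" "0 < \<phi> y j" "\<phi> z j < 0"
      using succ unfolding feeds_def by blast
    then have zi: "\<phi> z i < 0" using row_unique[OF y(1) z(2) y(2) z(3)] by simp
    have finC: "finite C" using fin CV finite_subset by blast
    have "(\<Sum>x\<in>C. \<phi> x i) = \<phi> y i + (\<Sum>x\<in>C - {y}. \<phi> x i)"
      using True finC by (simp add: sum.remove)
    also have "(\<Sum>x\<in>C - {y}. \<phi> x i) \<le> \<phi> z i"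
      using z(1) zi y(2) others CV finC by (intro sum_le_member_nonpos) auto
    finally have "(\<Sum>x\<in>C. \<phi> x i) \<le> 0" using le1[OF y(1)] zi by linarith
    moreover have "(\<Sum>x\<in>V - C. \<phi> x i) \<le> 0" using True others by (intro sum_nonpos) auto
    ultimately show ?thesis by (simp add: mult_nonpos_nonpos)
  next
    case False
    have "\<phi> z i = 0" if "z \<in> C" for z
    proof (rule ccontr)
      assume "\<phi> z i \<noteq> 0"
      then have "z = y \<or> feeds n \<phi> y z"
        using col_unique[of z y] that CV y i unfolding feeds_def by force
      then show False using False closed[OF y(1) that] that by blast
    qed
    then show ?thesis by simp
  qed
qed

lemma cut_pairing_negative:
  fixes \<phi> :: "'v \<Rightarrow> nat \<Rightarrow> int"
  assumes fin: "finite V"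
    and edge: "\<And>x y. E x y \<Longrightarrow> x \<in> V \<and> y \<in> V \<and> x \<noteq> y"
    and conn: "\<And>x y. x \<in> V \<Longrightarrow> y \<in> V \<Longrightarrow> E\<^sup>*\<^sup>* x y"
    and dot_nonpos: "\<And>x y. x \<in> V \<Longrightarrow> y \<in> V \<Longrightarrow> x \<noteq> y \<Longrightarrow> (\<Sum>i<n. \<phi> x i * \<phi> y i) \<le> 0"
    and dot_edge: "\<And>x y. E x y \<Longrightarrow> (\<Sum>i<n. \<phi> x i * \<phi> y i) < 0"
    and CV: "C \<subseteq> V" and c: "c \<in> C" and w: "w \<in> V" "w \<notin> C"
  shows "(\<Sum>y\<in>C. \<Sum>z\<in>V - C. \<Sum>i<n. \<phi> y i * \<phi> z i) < 0"
proof -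
  have "E\<^sup>*\<^sup>* c w" using conn c w CV by blast
  then obtain p q where pq: "E p q" "p \<in> C" "q \<notin> C"
    using rtranclp_exits_set c w(2) by metis
  have q: "q \<in> V - C" using pq edge by blast
  have finC: "finite C" using fin CV finite_subset by blast
  have dot_cut: "(\<Sum>i<n. \<phi> y i * \<phi> z i) \<le> 0" if "y \<in> C" "z \<in> V - C" for y z
    using that CV by (intro dot_nonpos) auto
  have "(\<Sum>y\<in>C. \<Sum>z\<in>V - C. \<Sum>i<n. \<phi> y i * \<phi> z i) \<le> (\<Sum>z\<in>V - C. \<Sum>i<n. \<phi> p i * \<phi> z i)"
    using dot_cut pq(2) finC by (intro sum_le_member_nonpos) (auto intro: sum_nonpos)
  also have "\<dots> \<le> (\<Sum>i<n. \<phi> p i * \<phi> q i)"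
    using dot_cut pq(2) q fin by (intro sum_le_member_nonpos) auto
  also have "\<dots> < 0" using dot_edge[OF pq(1)] .
  finally show ?thesis .
qed

lemma exists_unfed_vertex:
  fixes \<phi> :: "'v \<Rightarrow> nat \<Rightarrow> int"
  assumes fin: "finite V"
    and edge: "\<And>x y. E x y \<Longrightarrow> x \<in> V \<and> y \<in> V \<and> x \<noteq> y"
    and conn: "\<And>x y. x \<in> V \<Longrightarrow> y \<in> V \<Longrightarrow> E\<^sup>*\<^sup>* x y"
    and dot_nonpos: "\<And>x y. x \<in> V \<Longrightarrow> y \<in> V \<Longrightarrow> x \<noteq> y \<Longrightarrow> (\<Sum>i<n. \<phi> x i * \<phi> y i) \<le> 0"
    and dot_edge: "\<And>x y. E x y \<Longrightarrow> (\<Sum>i<n. \<phi> x i * \<phi> y i) < 0"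
    and le1: "\<And>x i. x \<in> V \<Longrightarrow> i < n \<Longrightarrow> \<phi> x i \<le> 1"
    and col_unique: "\<And>x y i. x \<in> V \<Longrightarrow> y \<in> V \<Longrightarrow> i < n \<Longrightarrow> 0 < \<phi> x i \<Longrightarrow> 0 < \<phi> y i \<Longrightarrow> x = y"
    and row_unique: "\<And>x i j. x \<in> V \<Longrightarrow> i < n \<Longrightarrow> j < n \<Longrightarrow> 0 < \<phi> x i \<Longrightarrow> 0 < \<phi> x j \<Longrightarrow> i = j"
    and w: "w \<in> V" "\<And>i. i < n \<Longrightarrow> \<phi> w i \<le> 0"
  shows "\<exists>x\<in>V. \<forall>y\<in>V. \<not> feeds n \<phi> y x"
proof (rule ccontr)
  assume all_fed: "\<not> ?thesis"
  define R where "R = {(y, x). y \<in> V \<and> x \<in> V \<and> feeds n \<phi> y x}"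
  have "R \<subseteq> V \<times> V" "V \<noteq> {}" using w(1) unfolding R_def by auto
  moreover have "\<exists>y. (y, x) \<in> R" if "x \<in> V" for x
    using all_fed that unfolding R_def by auto
  ultimately obtain C where CV: "C \<subseteq> V" and "C \<noteq> {}"
    and closed: "\<And>y z. (y, z) \<in> R \<Longrightarrow> z \<in> C \<Longrightarrow> y \<in> C"
    and succ: "\<And>y. y \<in> C \<Longrightarrow> \<exists>z\<in>C. (y, z) \<in> R"
    using finite_relation_closed_core[OF fin] by metis
  then obtain c where c: "c \<in> C" by blast
  have "w \<notin> C"
  proof
    assume "w \<in> C"
    then obtain i where "i < n" "0 < \<phi> w i"
      using succ unfolding R_def feeds_def by blast
    then show False using w(2) by force
  qed
  have "0 \<le> (\<Sum>i<n. (\<Sum>y\<in>C. \<phi> y i) * (\<Sum>z\<in>V - C. \<phi> z i))"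
  proof (intro sum_nonneg cut_column_product_nonneg[OF fin CV])
    show "y \<in> C" if "y \<in> V" "z \<in> C" "feeds n \<phi> y z" for y z
      using closed that CV unfolding R_def by blast
    show "\<exists>z\<in>C. feeds n \<phi> y z" if "y \<in> C" for y
      using succ[OF that] unfolding R_def by blast
  qed (use le1 col_unique row_unique in auto)
  also have "\<dots> = (\<Sum>y\<in>C. \<Sum>z\<in>V - C. \<Sum>i<n. \<phi> y i * \<phi> z i)"
    by (simp add: sum_product sum.swap[of _ "{..<n}"])
  also have "\<dots> < 0"
    using cut_pairing_negative[OF fin edge conn dot_nonpos dot_edge CV c w(1) \<open>w \<notin> C\<close>] .
  finally show False by simp
qed

lemma sq_plus_self_nonneg: "0 \<le> (a::int) * a + a"
proof -
  have "a * a + a = a * (a + 1)" by (simp add: algebra_simps)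
  then show ?thesis by (cases "a \<ge> 0") (auto intro: mult_nonpos_nonpos)
qed

lemma adjunction_special_index_unique:
  fixes a :: "nat \<Rightarrow> int"
  assumes adj: "(\<Sum>i<n. a i * a i + a i) = 2"
    and "i < n" "j < n" "a i \<in> {1, -2}" "a j \<in> {1, -2}"
  shows "i = j"
proof (rule ccontr)
  assume "i \<noteq> j"
  then have "(\<Sum>l\<in>{i, j}. a l * a l + a l) \<le> (\<Sum>l<n. a l * a l + a l)"
    using assms by (intro sum_mono2) (auto simp: sq_plus_self_nonneg)
  then show False using adj assms \<open>i \<noteq> j\<close> by auto
qed

lemma adjunction_special_index_exists:
  fixes a :: "nat \<Rightarrow> int"
  assumes adj: "(\<Sum>i<n. a i * a i + a i) = 2"
    and vals: "\<And>i. i < n \<Longrightarrow> a i \<in> {0, 1, -1, -2}"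
  shows "\<exists>i<n. a i \<in> {1, -2}"
proof (rule ccontr)
  assume "\<not> ?thesis"
  then have "\<forall>i<n. a i * a i + a i = 0" using vals by fastforce
  then show False using adj by simp
qed

lemma count_index_coeffs:
  assumes "finite V" "c \<noteq> 0"
  shows "count (index_coeffs V \<phi> i) c = card {x\<in>V. \<phi> x i = c}"
proof -
  have "count (index_coeffs V \<phi> i) c = card ((\<lambda>x. \<phi> x i) -` {c} \<inter> {x\<in>V. \<phi> x i \<noteq> 0})"
    unfolding index_coeffs_def using assms by (simp add: count_image_mset)
  also have "(\<lambda>x. \<phi> x i) -` {c} \<inter> {x\<in>V. \<phi> x i \<noteq> 0} = {x\<in>V. \<phi> x i = c}"
    using assms by auto
  finally show ?thesis .
qed

lemma coeff_in_index_coeffs: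
  assumes "finite V" "x \<in> V" "\<phi> x i \<noteq> 0"
  shows "\<phi> x i \<in># index_coeffs V \<phi> i"
  unfolding index_coeffs_def using assms by auto

locale column_typed_embedding =
  fixes V :: "'v set" and E :: "'v \<Rightarrow> 'v \<Rightarrow> bool" and d :: "'v \<Rightarrow> int"
    and \<phi> :: "'v \<Rightarrow> nat \<Rightarrow> int" and k :: nat and v :: 'v
  assumes in_S: "in_S V E d"
    and emb: "sympl_embedding V E d \<phi>"
    and column_types: "\<And>i. i < card V \<Longrightarrow>
      type2 V \<phi> i \<or> type4 V \<phi> i \<or> type5 V \<phi> i \<or> type7 V \<phi> i \<or> type9 V \<phi> i"
    and type2_iff: "\<And>i. i < card V \<Longrightarrow> type2 V \<phi> i \<longleftrightarrow> i = k"
    and k_less: "k < card V"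
    and type5_exists: "\<exists>p<card V. type5 V \<phi> p"
    and v: "v \<in> V" "\<phi> v k \<noteq> 0"
begin

abbreviation n where "n \<equiv> card V"

lemma finite_V: "finite V"
  using in_S unfolding in_S_def symplectic_plumbing_tree_def is_tree_def by blast

lemma edge_in_V: "E x y \<Longrightarrow> x \<in> V \<and> y \<in> V \<and> x \<noteq> y"
  using in_S unfolding in_S_def symplectic_plumbing_tree_def is_tree_def by blast

lemma connected: "x \<in> V \<Longrightarrow> y \<in> V \<Longrightarrow> E\<^sup>*\<^sup>* x y"
  using in_S unfolding in_S_def symplectic_plumbing_tree_def is_tree_def by blast

lemma coeff_beyond: "x \<in> V \<Longrightarrow> n \<le> j \<Longrightarrow> \<phi> x j = 0"
  using emb unfolding sympl_embedding_def by blast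

lemma dot_distinct:
  "x \<in> V \<Longrightarrow> y \<in> V \<Longrightarrow> x \<noteq> y \<Longrightarrow> (\<Sum>i<n. \<phi> x i * \<phi> y i) = (if E x y then -1 else 0)"
  using emb unfolding sympl_embedding_def Qn_def by (auto split: if_splits)

lemma self_dot: "x \<in> V \<Longrightarrow> (\<Sum>i<n. \<phi> x i * \<phi> x i) = - d x"
  using emb unfolding sympl_embedding_def Qn_def by auto

lemma adjunction: "x \<in> V \<Longrightarrow> (\<Sum>i<n. \<phi> x i * \<phi> x i + \<phi> x i) = 2"
proof -
  assume x: "x \<in> V"
  have "Qn n (\<phi> x) (Kn n) + Qn n (\<phi> x) (\<phi> x) = -2"
    using emb x unfolding sympl_embedding_def by blast
  moreover have "Qn n (\<phi> x) (Kn n) = - (\<Sum>i<n. \<phi> x i)" unfolding Qn_def Kn_def by simp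
  ultimately show ?thesis unfolding Qn_def by (simp add: sum.distrib)
qed

lemma index_coeffs_cases: "i < n \<Longrightarrow> index_coeffs V \<phi> i \<in>
    {{#-1#}, {#1, -1#}, {#1, -2#}, {#1, -1, -1#}, {#1, -1, -1, -1#}}"
  using column_types unfolding type2_def type4_def type5_def type7_def type9_def by blast

lemma coeff_cases: "x \<in> V \<Longrightarrow> i < n \<Longrightarrow> \<phi> x i \<in> {0, 1, -1, -2}"
  using coeff_in_index_coeffs[OF finite_V, of x \<phi> i] index_coeffs_cases[of i] by auto

lemma positive_coeff_eq_one: "x \<in> V \<Longrightarrow> i < n \<Longrightarrow> 0 < \<phi> x i \<Longrightarrow> \<phi> x i = 1"
  using coeff_cases by fastforce

lemma special_index_unique:
  "x \<in> V \<Longrightarrow> i < n \<Longrightarrow> j < n \<Longrightarrow> \<phi> x i \<in> {1, -2} \<Longrightarrow> \<phi> x j \<in> {1, -2} \<Longrightarrow> i = j"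
  using adjunction_special_index_unique adjunction by blast

lemma special_index_exists: "x \<in> V \<Longrightarrow> \<exists>i<n. \<phi> x i \<in> {1, -2}"
  using adjunction_special_index_exists adjunction coeff_cases by blast

lemma one_unique:
  assumes "x \<in> V" "y \<in> V" "i < n" "\<phi> x i = 1" "\<phi> y i = 1"
  shows "x = y"
proof -
  have "count (index_coeffs V \<phi> i) 1 \<le> 1" using index_coeffs_cases[OF assms(3)] by auto
  then have "card {x\<in>V. \<phi> x i = 1} \<le> 1" by (simp add: count_index_coeffs[OF finite_V])
  then show ?thesis using assms finite_V by (auto simp: card_le_Suc0_iff_eq)
qed

lemma one_exists: "i < n \<Longrightarrow> i \<noteq> k \<Longrightarrow> \<exists>y\<in>V. \<phi> y i = 1"
proof -
  assume i: "i < n" "i \<noteq> k"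
  then have "count (index_coeffs V \<phi> i) 1 = 1"
    using column_types[OF i(1)] type2_iff[OF i(1)]
    unfolding type4_def type5_def type7_def type9_def by auto
  then have "card {x\<in>V. \<phi> x i = 1} = 1" by (simp add: count_index_coeffs[OF finite_V])
  then show ?thesis by (metis (mono_tags, lifting) card_1_singletonE mem_Collect_eq singletonI)
qed

lemma column_k: "x \<in> V \<Longrightarrow> \<phi> x k \<noteq> 0 \<Longrightarrow> \<phi> x k = -1 \<and> x = v"
proof -
  assume x: "x \<in> V" "\<phi> x k \<noteq> 0"
  have col: "index_coeffs V \<phi> k = {#-1#}" using type2_iff k_less unfolding type2_def by blast
  then have minus_one: "\<phi> y k = -1" if "y \<in> V" "\<phi> y k \<noteq> 0" for y
    using coeff_in_index_coeffs[of V y \<phi> k, OF finite_V that] by simp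
  have "card {y\<in>V. \<phi> y k = -1} = 1"
    using col count_index_coeffs[OF finite_V, of "-1" \<phi> k] by simp
  then obtain z where z: "{y\<in>V. \<phi> y k = -1} = {z}" by (rule card_1_singletonE)
  have "\<phi> x k = -1" "\<phi> v k = -1" using minus_one x v by blast+
  then have "x \<in> {y\<in>V. \<phi> y k = -1}" "v \<in> {y\<in>V. \<phi> y k = -1}" using x v by simp_all
  then show ?thesis using \<open>\<phi> x k = -1\<close> unfolding z by simp
qed

lemma minus_two_exists: "\<exists>w\<in>V. \<exists>p<n. \<phi> w p = -2"
proof -
  obtain p where p: "p < n" "type5 V \<phi> p" using type5_exists by blast
  then have "card {x\<in>V. \<phi> x p = -2} = 1"
    using count_index_coeffs[OF finite_V, of "-2" \<phi> p] unfolding type5_def by simp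
  then show ?thesis using p(1) by (metis (mono_tags, lifting) card_1_singletonE mem_Collect_eq singletonI)
qed

lemma minus_two_vertex_has_minus_one_off_k:
  assumes x: "x \<in> V" and p: "p < n" "\<phi> x p = -2"
  shows "\<exists>i<n. i \<noteq> k \<and> \<phi> x i = -1"
proof -
  have "p \<noteq> k" using column_k x p by force
  then obtain u where u: "u \<in> V" "\<phi> u p = 1" using one_exists p(1) by blast
  then have "u \<noteq> x" using p by auto
  have "(\<Sum>i<n. \<phi> u i * \<phi> x i) = \<phi> u p * \<phi> x p + (\<Sum>i\<in>{..<n} - {p}. \<phi> u i * \<phi> x i)"
    using p(1) by (simp add: sum.remove)
  moreover have "-1 \<le> (\<Sum>i<n. \<phi> u i * \<phi> x i)" using dot_distinct[OF u(1) x \<open>u \<noteq> x\<close>] by simp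
  ultimately have "0 < (\<Sum>i\<in>{..<n} - {p}. \<phi> u i * \<phi> x i)" using u p by simp
  then obtain i where i: "i < n" "i \<noteq> p" "0 < \<phi> u i * \<phi> x i"
    using sum_nonpos[of "{..<n} - {p}" "\<lambda>i. \<phi> u i * \<phi> x i"] by (force simp: not_less)
  have "\<phi> u i \<notin> {1, -2}" using special_index_unique[OF u(1) i(1) p(1)] u(2) i(2) by auto
  then have "\<phi> u i < 0" using coeff_cases[OF u(1) i(1)] i(3) by auto
  then have "\<phi> x i < 0" using i(3) by (simp add: zero_less_mult_iff)
  moreover have "\<phi> x i \<noteq> -2" using special_index_unique[OF x i(1) p(1)] p(2) i(2) by auto
  ultimately have "\<phi> x i = -1" using coeff_cases[OF x i(1)] by auto
  moreover have "i \<noteq> k"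
  proof
    assume "i = k"
    then have "u = v" "x = v"
      using column_k[OF u(1)] column_k[OF x] \<open>\<phi> u i < 0\<close> \<open>\<phi> x i < 0\<close> by auto
    then show False using \<open>u \<noteq> x\<close> by simp
  qed
  ultimately show ?thesis using i(1) by blast
qed

lemma second_nonzero_coeff:
  assumes x: "x \<in> V" "x \<noteq> v" and a: "a < n" "\<phi> x a = 1"
  shows "\<exists>j<n. j \<noteq> a \<and> j \<noteq> k \<and> \<phi> x j \<noteq> 0"
proof -
  have "\<exists>j<n. j \<noteq> a \<and> \<phi> x j \<noteq> 0"
  proof (rule ccontr)
    assume "\<not> ?thesis"
    then have "(\<Sum>j<n. \<phi> x j * \<phi> x j) = (\<Sum>j<n. if j = a then 1 else 0)"
      using a by (intro sum.cong) auto
    then have "d x = -1" using self_dot[OF x(1)] a(1) by simp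
    then show False using in_S x(1) unfolding in_S_def minimal_plumbing_def by blast
  qed
  then show ?thesis using column_k x by blast
qed

lemma every_vertex_has_minus_one_off_k:
  assumes not_unit_diff: "\<not> (\<exists>a<n. \<phi> v a = 1 \<and> (\<forall>j<n. j \<noteq> a \<longrightarrow> j \<noteq> k \<longrightarrow> \<phi> v j = 0))"
    and x: "x \<in> V"
  shows "\<exists>i<n. i \<noteq> k \<and> \<phi> x i = -1"
proof -
  obtain a where a: "a < n" "\<phi> x a \<in> {1, -2}" using special_index_exists x by blast
  show ?thesis
  proof (cases "\<phi> x a = -2")
    case True
    then show ?thesis using minus_two_vertex_has_minus_one_off_k x a(1) by blast
  next
    case False
    then have "\<phi> x a = 1" using a by auto
    have "\<exists>j<n. j \<noteq> a \<and> j \<noteq> k \<and> \<phi> x j \<noteq> 0"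
    proof (cases "x = v")
      case True
      then show ?thesis using not_unit_diff \<open>\<phi> x a = 1\<close> a(1) by blast
    next
      case False
      then show ?thesis using second_nonzero_coeff x a(1) \<open>\<phi> x a = 1\<close> by blast
    qed
    then obtain j where j: "j < n" "j \<noteq> a" "j \<noteq> k" "\<phi> x j \<noteq> 0" by blast
    have "\<phi> x j \<notin> {1, -2}" using special_index_unique[OF x j(1) a(1) _ a(2)] j(2) by blast
    then have "\<phi> x j = -1" using coeff_cases[OF x j(1)] j(4) by auto
    then show ?thesis using j by blast
  qed
qed

lemma v_coeffs_unit_difference: "\<exists>a<n. \<phi> v a = 1 \<and> (\<forall>j<n. j \<noteq> a \<longrightarrow> j \<noteq> k \<longrightarrow> \<phi> v j = 0)"
proof (rule ccontr)
  assume not_unit_diff: "\<not> ?thesis"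
  obtain w p where w: "w \<in> V" "p < n" "\<phi> w p = -2" using minus_two_exists by blast
  have w_nonpos: "\<phi> w i \<le> 0" if i: "i < n" for i
  proof (rule ccontr)
    assume "\<not> \<phi> w i \<le> 0"
    then have "\<phi> w i = 1" using positive_coeff_eq_one w(1) i by simp
    then show False using special_index_unique[OF w(1) i w(2)] w(3) by auto
  qed
  have fed: "\<exists>y\<in>V. feeds n \<phi> y x" if x: "x \<in> V" for x
  proof -
    obtain i where i: "i < n" "i \<noteq> k" "\<phi> x i = -1"
      using every_vertex_has_minus_one_off_k[OF not_unit_diff x] by blast
    moreover obtain y where "y \<in> V" "\<phi> y i = 1" using one_exists i by blast
    ultimately show ?thesis unfolding feeds_def by force
  qed
  have "\<exists>x\<in>V. \<forall>y\<in>V. \<not> feeds n \<phi> y x"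
  proof (rule exists_unfed_vertex[where E = E and n = n and \<phi> = \<phi>, OF finite_V edge_in_V connected _ _ _ _ _ w(1) w_nonpos])
    show "(\<Sum>i<n. \<phi> x i * \<phi> y i) \<le> 0" if "x \<in> V" "y \<in> V" "x \<noteq> y" for x y
      using dot_distinct[OF that] by simp
    show "(\<Sum>i<n. \<phi> x i * \<phi> y i) < 0" if "E x y" for x y
      using dot_distinct edge_in_V[OF that] that by simp
    show "\<phi> x i \<le> 1" if "x \<in> V" "i < n" for x i
      using coeff_cases[OF that] by auto
    show "x = y" if "x \<in> V" "y \<in> V" "i < n" "0 < \<phi> x i" "0 < \<phi> y i" for x y i
      using one_unique[OF that(1-3)] positive_coeff_eq_one that by simp
    show "i = j" if "x \<in> V" "i < n" "j < n" "0 < \<phi> x i" "0 < \<phi> x j" for x i j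
      using special_index_unique[OF that(1-3)] positive_coeff_eq_one that by simp
  qed
  then show False using fed by blast
qed

lemma v_is_unit_difference:
  "d v = -2 \<and> (\<exists>i<n. \<phi> v = (\<lambda>j. unitv i j - unitv k j))"
proof -
  obtain a where a: "a < n" "\<phi> v a = 1" "\<forall>j<n. j \<noteq> a \<longrightarrow> j \<noteq> k \<longrightarrow> \<phi> v j = 0"
    using v_coeffs_unit_difference by blast
  have vk: "\<phi> v k = -1" using column_k v by blast
  then have "a \<noteq> k" using a(2) by auto
  have unit_diff: "\<phi> v = (\<lambda>j. unitv a j - unitv k j)"
  proof
    fix j
    show "\<phi> v j = unitv a j - unitv k j"
      using a vk \<open>a \<noteq> k\<close> k_less coeff_beyond[OF v(1), of j] unfolding unitv_def
      by (cases "j < n") auto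
  qed
  have "(\<Sum>j<n. \<phi> v j * \<phi> v j) = (\<Sum>j<n. unitv a j + unitv k j)"
    unfolding unit_diff unitv_def using \<open>a \<noteq> k\<close> by (intro sum.cong) auto
  also have "\<dots> = 2" using a(1) k_less by (simp add: sum.distrib unitv_def)
  finally have "d v = -2" using self_dot[OF v(1)] by simp
  then show ?thesis using unit_diff a(1) by blast
qed

end

theorem proposition5p4:
  fixes V :: "'v set" and E :: "'v \<Rightarrow> 'v \<Rightarrow> bool" and d :: "'v \<Rightarrow> int"
    and \<phi> :: "'v \<Rightarrow> nat \<Rightarrow> int" and k :: nat
  assumes S: "in_S V E d"
    and emb: "sympl_embedding V E d \<phi>"
    and t9: "card {i. i < card V \<and> type9 V \<phi> i} = 1"
    and t5: "card {i. i < card V \<and> type5 V \<phi> i} = 1"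
    and t2: "{i. i < card V \<and> type2 V \<phi> i} = {k}"
    and rest: "\<forall>i < card V. \<not> type9 V \<phi> i \<and> \<not> type5 V \<phi> i \<and> \<not> type2 V \<phi> i
                 \<longrightarrow> type4 V \<phi> i \<or> type7 V \<phi> i"
    and v: "v \<in> V" "\<phi> v k \<noteq> 0"
  shows "d v = -2 \<and> (\<exists>i < card V. \<phi> v = (\<lambda>j. unitv i j - unitv k j))"
proof -
  have types: "\<And>i. i < card V \<Longrightarrow>
      type2 V \<phi> i \<or> type4 V \<phi> i \<or> type5 V \<phi> i \<or> type7 V \<phi> i \<or> type9 V \<phi> i"
    using rest by blast
  have type2_iff: "\<And>i. i < card V \<Longrightarrow> type2 V \<phi> i \<longleftrightarrow> i = k" and "k < card V"
    using t2 by blast+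
  have "{i. i < card V \<and> type5 V \<phi> i} \<noteq> {}" using t5 by force
  then have type5: "\<exists>p<card V. type5 V \<phi> p" by blast
  interpret column_typed_embedding V E d \<phi> k v
    by (rule column_typed_embedding.intro[OF S emb types type2_iff \<open>k < card V\<close> type5 v])
  show ?thesis by (rule v_is_unit_difference)
qed

end
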